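(* Let $A$ be a finite-dimensional real algebra with identity $e$ in which every subalgebra generated by a single element is associative, and let $(p^{[n]}(t))_{n\in\mathbb N}$, $p^{[n]}(t)=\sum_{k=0}^\infty a_k^{[n]}t^k$, be any sequence of real power series with $\sum_{k}|a_k^{[n]}|<\infty$ for each $n$ and $\lim_{n\to\infty}\sup\{|a_k^{[n]}|:k\ge1\}=0$. If $x\in A$ and $\lim_{n\to\infty}x^n=x_0$, then $\lim_{n\to\infty}p^{[n]}(x)$ exists if and only if $\lim_{n\to\infty}\big[a_0^{[n]}e+(p^{[n]}(1)-a_0^{[n]})x_0\big]$ exists, and in that case $$\lim_{n\to\infty}p^{[n]}(x)=\lim_{n\to\infty}\big[a_0^{[n]}e+(p^{[n]}(1)-a_0^{[n]})x_0\big].$$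
   Context: $A$ carries the Euclidean topology; $p^{[n]}(x)=a_0^{[n]}e+\sum_{k\ge1}a_k^{[n]}x^k$ and $p^{[n]}(1)=\sum_{k\ge0}a_k^{[n]}$. The sequence $(p^{[n]})$ is arbitrary (not necessarily iterates). *)

theory Defs
  imports "HOL-Analysis.Analysis"
begin

text \<open>A (possibly non-associative) finite-dimensional real algebra is modelled by a
finite-dimensional real vector space (type class euclidean_space, carrying the Euclidean
topology) together with a bilinear multiplication muland an identity e.\<close>

definition is_subalgebra :: "('a::real_vector \<Rightarrow> 'a \<Rightarrow> 'a) \<Rightarrow> 'a set \<Rightarrow> bool" where
  "is_subalgebra mul S \<longleftrightarrow> subspace S \<and> (\<forall>u\<in>S. \<forall>v\<in>S. mul u v \<in> S)"

definition gen_subalgebra :: "('a::real_vector \<Rightarrow> 'a \<Rightarrow> 'a) \<Rightarrow> 'a \<Rightarrow> 'a set" where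
  "gen_subalgebra mul y = \<Inter>{S. is_subalgebra mul S \<and> y \<in> S}"

definition assoc_on :: "('a \<Rightarrow> 'a \<Rightarrow> 'a) \<Rightarrow> 'a set \<Rightarrow> bool" where
  "assoc_on mul S \<longleftrightarrow> (\<forall>u\<in>S. \<forall>v\<in>S. \<forall>w\<in>S. mul (mul u v) w = mul u (mul v w))"

text \<open>Powers: x^0 = e, x^(n+1) = x x^n (well defined by power-associativity).\<close>
fun apow :: "('a \<Rightarrow> 'a \<Rightarrow> 'a) \<Rightarrow> 'a \<Rightarrow> 'a \<Rightarrow> nat \<Rightarrow> 'a" where
  "apow mul e x 0 = e"
| "apow mul e x (Suc n) = mul x (apow mul e x n)"

definition pseries_eval :: "('a::real_normed_vector \<Rightarrow> 'a \<Rightarrow> 'a) \<Rightarrow> 'a \<Rightarrow> (nat \<Rightarrow> real) \<Rightarrow> 'a \<Rightarrow> 'a" where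
  "pseries_eval mul e c x = c 0 *\<^sub>R e + (\<Sum>k. c (Suc k) *\<^sub>R apow mul e x (Suc k))"

end

(* Power associativity makes n \<mapsto> x^n multiplicative, and passing to the limit shows that x0
   is an idempotent absorbing every power of x. Hence d k = x^k - x0 is again multiplicative,
   d (m + j) = d m d j, and since d k \<rightarrow> 0 some d m is small, so d decays geometrically and
   S = \<Sum>k\<ge>1. \<parallel>d k\<parallel> is finite. The difference between p^[n](x) and a0 e + (p^[n](1) - a0) x0 is
   \<Sum>k\<ge>1. a_k d k, of norm at most S sup{|a_k| : k \<ge> 1} \<rightarrow> 0, so both sequences converge
   together and to the same limit. *)
theory Submission
  imports Defs
begin

lemma apow_in_subalgebra:
  assumes "mul x e = x" "is_subalgebra mul S" "x \<in> S"
  shows "apow mul e x (Suc k) \<in> S"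
proof (induction k)
  case 0
  then show ?case using assms by simp
next
  case (Suc k)
  then show ?case using assms unfolding is_subalgebra_def by simp
qed

lemma apow_in_gen_subalgebra:
  assumes "mul x e = x"
  shows "apow mul e x (Suc k) \<in> gen_subalgebra mul x"
  unfolding gen_subalgebra_def using apow_in_subalgebra[of mul x e] assms by blast

lemma apow_add:
  assumes unit: "\<And>y. mul e y = y \<and> mul y e = y"
    and assoc: "assoc_on mul (gen_subalgebra mul x)"
  shows "apow mul e x (m + j) = mul (apow mul e x m) (apow mul e x j)"
proof (induction m)
  case 0
  then show ?case using unit by simp
next
  case (Suc m)
  show ?case
  proof (cases "m = 0 \<or> j = 0")
    case True
    then show ?thesis using unit by auto
  next
    case False
    then obtain m' j' where "m = Suc m'" "j = Suc j'"
      by (meson not0_implies_Suc)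
    then have "x \<in> gen_subalgebra mul x" "apow mul e x m \<in> gen_subalgebra mul x"
      "apow mul e x j \<in> gen_subalgebra mul x"
      using apow_in_gen_subalgebra[of mul x e] unit by (metis apow.simps)+
    then show ?thesis
      using assoc Suc.IH unfolding assoc_on_def by simp
  qed
qed

text \<open>The limit x0 absorbs every p m on both sides and is idempotent.\<close>
lemma multiplicative_seq_minus_limit:
  fixes mul :: "'a::real_normed_vector \<Rightarrow> 'a \<Rightarrow> 'a"
  assumes bb: "bounded_bilinear mul"
    and mult: "\<And>m j. p (m + j) = mul (p m) (p j)"
    and lim: "p \<longlonglongrightarrow> x0"
  shows "p (m + j) - x0 = mul (p m - x0) (p j - x0)"
proof -
  have shift: "(\<lambda>n. p (n + k)) \<longlonglongrightarrow> x0" for k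
    using LIMSEQ_ignore_initial_segment[OF lim] .
  have left: "mul (p i) x0 = x0" for i
  proof -
    have "(\<lambda>n. mul (p i) (p n)) \<longlonglongrightarrow> mul (p i) x0"
      by (rule bounded_bilinear.tendsto[OF bb tendsto_const lim])
    then show ?thesis
      using shift[of i] LIMSEQ_unique by (simp add: mult[symmetric] add.commute)
  qed
  have right: "mul x0 (p i) = x0" for i
  proof -
    have "(\<lambda>n. mul (p n) (p i)) \<longlonglongrightarrow> mul x0 (p i)"
      by (rule bounded_bilinear.tendsto[OF bb lim tendsto_const])
    then show ?thesis
      using shift[of i] LIMSEQ_unique by (simp add: mult[symmetric])
  qed
  have idem: "mul x0 x0 = x0"
  proof -
    have "(\<lambda>n. mul x0 (p n)) \<longlonglongrightarrow> mul x0 x0"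
      by (rule bounded_bilinear.tendsto[OF bb tendsto_const lim])
    then show ?thesis using right by (simp add: LIMSEQ_const_iff)
  qed
  show ?thesis
    by (simp add: bounded_bilinear.diff_left[OF bb] bounded_bilinear.diff_right[OF bb]
        left right idem mult)
qed

lemma power_div_Suc_le_root_power:
  fixes c :: real
  assumes "0 \<le> c" "c \<le> 1" "0 < m"
  shows "c ^ (k div m + 1) \<le> root m c ^ k"
proof -
  let ?r = "root m c"
  have r: "0 \<le> ?r" "?r \<le> 1" "?r ^ m = c"
    using assms by (auto intro: real_root_ge_zero)
  have "c ^ (k div m + 1) = ?r ^ (m * (k div m)) * ?r ^ m"
    by (simp add: r(3) power_mult power_add)
  also have "\<dots> \<le> ?r ^ (m * (k div m)) * ?r ^ (k mod m)"
    using r assms(3) by (intro mult_left_mono power_decreasing) (auto simp: less_imp_le)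
  also have "\<dots> = ?r ^ k"
    by (simp flip: power_add)
  finally show ?thesis .
qed

text \<open>Choosing m with \<parallel>d m\<parallel> K \<le> 1/2 (K the bound of mul), the norms halve every m steps,
  which is a geometric decay with ratio root m (1/2).\<close>
lemma multiplicative_seq_summable_norm:
  fixes mul :: "'a::real_normed_vector \<Rightarrow> 'a \<Rightarrow> 'a" and d :: "nat \<Rightarrow> 'a"
  assumes bb: "bounded_bilinear mul"
    and lim: "d \<longlonglongrightarrow> 0"
    and mult: "\<And>m j. d (m + j) = mul (d m) (d j)"
  shows "summable (\<lambda>k. norm (d k))"
proof -
  obtain K where K: "\<And>u v. norm (mul u v) \<le> norm u * norm v * K"
    using bounded_bilinear.bounded[OF bb] by blast
  have "(\<lambda>k. norm (d k) * K) \<longlonglongrightarrow> 0"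
    using lim by (simp add: tendsto_mult_left_zero tendsto_norm_zero)
  then have "\<forall>\<^sub>F k in sequentially. 0 < k \<and> norm (d k) * K < 1/2"
    by (intro eventually_conj eventually_gt_at_top order_tendstoD) auto
  then obtain m where m: "0 < m" "norm (d m) * K \<le> 1/2"
    unfolding eventually_sequentially by (metis le_refl less_imp_le)
  have halving: "norm (d (q * m + r)) \<le> (1/2) ^ q * norm (d r)" for q r
  proof (induction q)
    case 0
    then show ?case by simp
  next
    case (Suc q)
    have "norm (d (Suc q * m + r)) \<le> norm (d m) * K * norm (d (q * m + r))"
      using K[of "d m" "d (q * m + r)"] mult[of m "q * m + r"] by (simp add: add.assoc mult.commute)
    also have "\<dots> \<le> 1/2 * ((1/2) ^ q * norm (d r))"
      using m(2) Suc.IH by (intro mult_mono) auto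
    finally show ?case by simp
  qed
  define C where "C = Max ((\<lambda>r. norm (d r)) ` {..<m})"
  have C: "norm (d r) \<le> C" if "r < m" for r
    unfolding C_def using that by (intro Max_ge) auto
  have "0 \<le> C"
    using C[of 0] m(1) norm_ge_zero[of "d 0"] by linarith
  have bound: "norm (d k) \<le> C * (2 * root m (1/2) ^ k)" for k
  proof -
    have "norm (d k) \<le> (1/2) ^ (k div m) * norm (d (k mod m))"
      using halving[of "k div m" "k mod m"] by simp
    also have "\<dots> \<le> (1/2) ^ (k div m) * C"
      using C m(1) by (intro mult_left_mono) auto
    also have "\<dots> = C * (2 * (1/2) ^ (k div m + 1))"
      by simp
    also have "\<dots> \<le> C * (2 * root m (1/2) ^ k)"
      using \<open>0 \<le> C\<close> m(1) power_div_Suc_le_root_power[of "1/2" m k]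
      by (intro mult_left_mono) auto
    finally show ?thesis .
  qed
  have major: "summable (\<lambda>k. C * (2 * root m (1/2) ^ k))"
    using m(1) by (intro summable_mult summable_geometric) (simp add: real_root_ge_zero)
  show ?thesis
    by (rule summable_comparison_test'[OF major, where N = 0]) (simp add: bound)
qed

lemma norm_suminf_scaleR_le:
  fixes d :: "nat \<Rightarrow> 'a::banach"
  assumes "\<And>k. \<bar>c k\<bar> \<le> B" "summable (\<lambda>k. norm (d k))"
  shows "summable (\<lambda>k. c k *\<^sub>R d k)"
    and "norm (\<Sum>k. c k *\<^sub>R d k) \<le> B * (\<Sum>k. norm (d k))"
proof -
  have bound: "norm (c k *\<^sub>R d k) \<le> B * norm (d k)" for k
    using assms(1)[of k] by (simp add: mult_right_mono)
  have major: "summable (\<lambda>k. B * norm (d k))"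
    using assms(2) by (rule summable_mult)
  have norms: "summable (\<lambda>k. norm (c k *\<^sub>R d k))"
    by (rule summable_comparison_test'[OF major, where N = 0]) (use bound in auto)
  then show "summable (\<lambda>k. c k *\<^sub>R d k)"
    by (rule summable_norm_cancel)
  have "norm (\<Sum>k. c k *\<^sub>R d k) \<le> (\<Sum>k. norm (c k *\<^sub>R d k))"
    by (rule summable_norm[OF norms])
  also have "\<dots> \<le> (\<Sum>k. B * norm (d k))"
    by (rule suminf_le[OF bound norms major])
  finally show "norm (\<Sum>k. c k *\<^sub>R d k) \<le> B * (\<Sum>k. norm (d k))"
    using suminf_mult[OF assms(2)] by simp
qed

lemma abs_le_SUP_abs:
  fixes c :: "nat \<Rightarrow> real"
  assumes "summable (\<lambda>k. \<bar>c k\<bar>)" "k \<in> A"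
  shows "\<bar>c k\<bar> \<le> (SUP k\<in>A. \<bar>c k\<bar>)"
proof (rule cSUP_upper[OF assms(2)])
  show "bdd_above ((\<lambda>k. \<bar>c k\<bar>) ` A)"
    using sum_le_suminf[OF assms(1), of "{_}"] by (intro bdd_aboveI2) simp
qed

text \<open>The difference on the left is \<Sum>k\<ge>1. c k (x^k - x0).\<close>
lemma norm_pseries_eval_minus_limit_le:
  fixes mul :: "'a::banach \<Rightarrow> 'a \<Rightarrow> 'a" and c :: "nat \<Rightarrow> real"
  assumes c: "summable (\<lambda>k. \<bar>c k\<bar>)"
    and d: "summable (\<lambda>k. norm (apow mul e x k - x0))"
  shows "norm (pseries_eval mul e c x - (c 0 *\<^sub>R e + (suminf c - c 0) *\<^sub>R x0))
    \<le> (SUP k\<in>{1..}. \<bar>c k\<bar>) * (\<Sum>k. norm (apow mul e x (Suc k) - x0))"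
proof -
  define D where "D k = apow mul e x (Suc k) - x0" for k
  have D: "summable (\<lambda>k. norm (D k))"
    unfolding D_def using d by (rule summable_ignore_initial_segment[of _ 1, simplified])
  have sup: "\<bar>c (Suc k)\<bar> \<le> (SUP k\<in>{1..}. \<bar>c k\<bar>)" for k
    using abs_le_SUP_abs[OF c] by simp
  note est = norm_suminf_scaleR_le[OF sup D]
  have c1: "summable (\<lambda>k. c (Suc k))"
    using summable_rabs_cancel[OF c] by (rule summable_ignore_initial_segment[of _ 1, simplified])
  have "(suminf c - c 0) *\<^sub>R x0 = (\<Sum>k. c (Suc k) *\<^sub>R x0)"
    using suminf_split_head[OF summable_rabs_cancel[OF c]] suminf_scaleR_left[OF c1] by simp
  moreover have "(\<Sum>k. c (Suc k) *\<^sub>R apow mul e x (Suc k))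
      = (\<Sum>k. c (Suc k) *\<^sub>R D k) + (\<Sum>k. c (Suc k) *\<^sub>R x0)"
    using suminf_add[OF est(1) summable_scaleR_left[OF c1]]
    by (simp add: D_def scaleR_diff_right)
  ultimately have "pseries_eval mul e c x - (c 0 *\<^sub>R e + (suminf c - c 0) *\<^sub>R x0)
      = (\<Sum>k. c (Suc k) *\<^sub>R D k)"
    by (simp add: pseries_eval_def)
  then show ?thesis
    using est(2) by (simp add: D_def)
qed

lemma convergent_and_lim_eq_if_diff_tendsto_zero:
  fixes f g :: "nat \<Rightarrow> 'a::real_normed_vector"
  assumes "(\<lambda>n. f n - g n) \<longlonglongrightarrow> 0"
  shows "(convergent f \<longleftrightarrow> convergent g) \<and> (convergent g \<longrightarrow> lim f = lim g)"
proof -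
  have "(\<lambda>n. g n - f n) \<longlonglongrightarrow> 0"
    using tendsto_minus[OF assms] by simp
  then have "f \<longlonglongrightarrow> L \<longleftrightarrow> g \<longlonglongrightarrow> L" for L
    using Lim_transform assms by blast
  then show ?thesis
    by (simp add: convergent_def lim_def)
qed

theorem lemma2:
  fixes mul :: "'a::euclidean_space \<Rightarrow> 'a \<Rightarrow> 'a"
    and e x x0 :: 'a
    and a :: "nat \<Rightarrow> nat \<Rightarrow> real"
  assumes bil: "bilinear mul"
    and unit: "\<And>y. mul e y = y \<and> mul y e = y"
    and pow_assoc: "\<And>y. assoc_on mul (gen_subalgebra mul y)"
    and abs_summable: "\<And>n. summable (\<lambda>k. \<bar>a n k\<bar>)"
    and sup_lim: "(\<lambda>n. SUP k\<in>{1..}. \<bar>a n k\<bar>) \<longlonglongrightarrow> 0"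
    and xlim: "(\<lambda>n. apow mul e x n) \<longlonglongrightarrow> x0"
  shows "(convergent (\<lambda>n. pseries_eval mul e (a n) x)
           \<longleftrightarrow> convergent (\<lambda>n. a n 0 *\<^sub>R e + (suminf (a n) - a n 0) *\<^sub>R x0))
         \<and> (convergent (\<lambda>n. a n 0 *\<^sub>R e + (suminf (a n) - a n 0) *\<^sub>R x0) \<longrightarrow>
           lim (\<lambda>n. pseries_eval mul e (a n) x)
           = lim (\<lambda>n. a n 0 *\<^sub>R e + (suminf (a n) - a n 0) *\<^sub>R x0))"
proof (rule convergent_and_lim_eq_if_diff_tendsto_zero)
  have bb: "bounded_bilinear mul"
    using bil bilinear_conv_bounded_bilinear by blast
  have "summable (\<lambda>k. norm (apow mul e x k - x0))"
  proof (rule multiplicative_seq_summable_norm[OF bb])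
    show "(\<lambda>k. apow mul e x k - x0) \<longlonglongrightarrow> 0"
      using xlim by (simp add: LIM_zero)
    show "apow mul e x (m + j) - x0 = mul (apow mul e x m - x0) (apow mul e x j - x0)" for m j
      using multiplicative_seq_minus_limit[OF bb apow_add[OF unit pow_assoc] xlim] .
  qed
  note estimate = norm_pseries_eval_minus_limit_le[OF abs_summable this]
  let ?bound = "\<lambda>n. (SUP k\<in>{1..}. \<bar>a n k\<bar>) * (\<Sum>k. norm (apow mul e x (Suc k) - x0))"
  have "?bound \<longlonglongrightarrow> 0"
    using sup_lim by (rule tendsto_mult_left_zero)
  then show "(\<lambda>n. pseries_eval mul e (a n) x - (a n 0 *\<^sub>R e + (suminf (a n) - a n 0) *\<^sub>R x0))
      \<longlonglongrightarrow> 0"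
    by (rule Lim_null_comparison[OF always_eventually, rotated]) (use estimate in blast)
qed

end
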